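(* Let $G$ be a triangle-free graph and $n\ge 1$. Then every induced subgraph of $KB(G)$ isomorphic to $K_{1,n}$ is contained in a (not necessarily induced) subgraph of $KB(G)$ isomorphic to $(D_n)^2$ or to $(D_n^-)^2$.
   Context: All graphs are finite and simple. A biclique of a graph $G$ is a set $P\subseteq V(G)$ such that the induced subgraph $G[P]$ is a complete bipartite graph with both parts nonempty, and $P$ is inclusion-maximal with this property. The biclique graph $KB(G)$ has the set of bicliques of $G$ as vertex set, two distinct bicliques being adjacent iff they intersect. For a graph $H$, the square $H^2$ has vertex set $V(H)$, two distinct vertices being adjacent iff their distance in $H$ is at most $2$. $D_n$ is the graph with vertex set $\{v,u_1,\dots,u_n,w_1,\dots,w_n\}$ and edge set $\{vu_i:1\le i\le n\}\cup\{u_iw_i:1\le i\le n\}$, and $D_n^-$ is the graph $D_n-w_n$ obtained by deleting the vertex $w_n$. *)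

theory Defs
  imports Main
begin

type_synonym 'a graph = "'a set \<times> ('a \<Rightarrow> 'a \<Rightarrow> bool)"

definition verts :: "'a graph \<Rightarrow> 'a set" where "verts G = fst G"
definition adj :: "'a graph \<Rightarrow> 'a \<Rightarrow> 'a \<Rightarrow> bool" where "adj G = snd G"

definition simple_graph :: "'a graph \<Rightarrow> bool" where
  "simple_graph G \<longleftrightarrow> finite (verts G) \<and>
     (\<forall>x y. adj G x y \<longrightarrow> x \<in> verts G \<and> y \<in> verts G \<and> x \<noteq> y \<and> adj G y x)"

definition triangle_free :: "'a graph \<Rightarrow> bool" where
  "triangle_free G \<longleftrightarrow> \<not> (\<exists>x y z. adj G x y \<and> adj G y z \<and> adj G x z)"

definition induced :: "'a graph \<Rightarrow> 'a set \<Rightarrow> 'a graph" where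
  "induced G S = (S, \<lambda>x y. x \<in> S \<and> y \<in> S \<and> adj G x y)"

definition complete_bipartite_on :: "'a graph \<Rightarrow> 'a set \<Rightarrow> bool" where
  "complete_bipartite_on G P \<longleftrightarrow> (\<exists>X Y. X \<noteq> {} \<and> Y \<noteq> {} \<and> X \<inter> Y = {} \<and> X \<union> Y = P \<and>
      (\<forall>x\<in>X. \<forall>y\<in>Y. adj G x y) \<and>
      (\<forall>x\<in>X. \<forall>x'\<in>X. \<not> adj G x x') \<and>
      (\<forall>y\<in>Y. \<forall>y'\<in>Y. \<not> adj G y y'))"

definition is_biclique :: "'a graph \<Rightarrow> 'a set \<Rightarrow> bool" where
  "is_biclique G P \<longleftrightarrow> P \<subseteq> verts G \<and> complete_bipartite_on G P \<and>
     (\<forall>Q. P \<subset> Q \<and> Q \<subseteq> verts G \<longrightarrow> \<not> complete_bipartite_on G Q)"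

definition KB :: "'a graph \<Rightarrow> 'a set graph" where
  "KB G = ({P. is_biclique G P},
           \<lambda>P Q. is_biclique G P \<and> is_biclique G Q \<and> P \<noteq> Q \<and> P \<inter> Q \<noteq> {})"

definition square :: "'a graph \<Rightarrow> 'a graph" where
  "square H = (verts H, \<lambda>x y. x \<in> verts H \<and> y \<in> verts H \<and> x \<noteq> y \<and>
      (adj H x y \<or> (\<exists>z \<in> verts H. adj H x z \<and> adj H z y)))"

definition isomorphic :: "'a graph \<Rightarrow> 'b graph \<Rightarrow> bool" where
  "isomorphic G H \<longleftrightarrow> (\<exists>f. bij_betw f (verts G) (verts H) \<and>
      (\<forall>x\<in>verts G. \<forall>y\<in>verts G. adj G x y \<longleftrightarrow> adj H (f x) (f y)))"

definition subgraph :: "'a graph \<Rightarrow> 'a graph \<Rightarrow> bool" where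
  "subgraph H G \<longleftrightarrow> simple_graph H \<and> verts H \<subseteq> verts G \<and> (\<forall>x y. adj H x y \<longrightarrow> adj G x y)"

definition star :: "nat \<Rightarrow> nat graph" where
  "star n = ({0..n}, \<lambda>x y. x \<in> {0..n} \<and> y \<in> {0..n} \<and> ((x = 0 \<and> y \<noteq> 0) \<or> (y = 0 \<and> x \<noteq> 0)))"

text \<open>D_n: v = 0, u_i = i, w_i = n + i (1 \<le> i \<le> n).\<close>
definition D :: "nat \<Rightarrow> nat graph" where
  "D n = ({0..2*n}, \<lambda>x y.
      (x = 0 \<and> 1 \<le> y \<and> y \<le> n) \<or> (y = 0 \<and> 1 \<le> x \<and> x \<le> n) \<or>
      (1 \<le> x \<and> x \<le> n \<and> y = n + x) \<or> (1 \<le> y \<and> y \<le> n \<and> x = n + y))"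

text \<open>D_n^- = D_n - w_n (delete vertex 2n).\<close>
definition D_minus :: "nat \<Rightarrow> nat graph" where
  "D_minus n = induced (D n) (verts (D n) - {2*n})"

end

theory Submission
  imports Defs "HOL-Combinatorics.Transposition"
begin

text \<open>Let the induced star of \<open>KB G\<close> have centre \<open>C\<close> and leaves \<open>L\<^sub>1, \<dots>, L\<^sub>n\<close>: pairwise
  disjoint bicliques, each meeting \<open>C\<close>. As \<open>G\<close> is triangle-free, the closed neighbourhood of a
  vertex \<open>z\<close> is complete bipartite and hence lies in a biclique. Two such closed neighbourhoods of
  vertices taken from disjoint bicliques never fit into one biclique, and two vertices of the
  biclique \<open>C\<close> have intersecting closed neighbourhoods.

  If every leaf \<open>L\<^sub>i\<close> contains a vertex \<open>z\<^sub>i \<in> C\<close> with neighbours outside both \<open>C\<close> and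
  \<open>L\<^sub>i\<close>, the bicliques \<open>M\<^sub>i\<close> around \<open>z\<^sub>i\<close> are new, pairwise distinct and pairwise intersecting,
  and \<open>C, M\<^sub>i, L\<^sub>i\<close> label the vertices \<open>v, u\<^sub>i, w\<^sub>i\<close> of \<open>D\<^sub>n\<^sup>2\<close>. Otherwise some leaf, say
  \<open>L\<^sub>n\<close>, shares an edge with \<open>C\<close>; maximality of the other leaves still yields such \<open>z\<^sub>i\<close>
  with neighbours outside \<open>C\<close> (\<open>i < n\<close>), every closed neighbourhood inside \<open>C\<close> meets that edge,
  and \<open>L\<^sub>n\<close> itself labels \<open>u\<^sub>n\<close>, giving \<open>(D\<^sub>n\<^sup>-)\<^sup>2\<close>.\<close>

definition neighbours :: "'a graph \<Rightarrow> 'a \<Rightarrow> 'a set" where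
  "neighbours G x = {y. adj G x y}"

definition bipartition :: "'a graph \<Rightarrow> 'a set \<Rightarrow> 'a set \<Rightarrow> bool" where
  "bipartition G A B \<longleftrightarrow> A \<noteq> {} \<and> B \<noteq> {} \<and> A \<inter> B = {} \<and> (\<forall>x\<in>A. \<forall>y\<in>B. adj G x y) \<and>
      (\<forall>x\<in>A. \<forall>x'\<in>A. \<not> adj G x x') \<and> (\<forall>y\<in>B. \<forall>y'\<in>B. \<not> adj G y y')"

lemma complete_bipartite_on_iff_bipartition:
  "complete_bipartite_on G P \<longleftrightarrow> (\<exists>A B. bipartition G A B \<and> A \<union> B = P)"
  unfolding complete_bipartite_on_def bipartition_def by (intro iff_exI) auto

lemma simple_graph_adjD:
  "simple_graph G \<Longrightarrow> adj G x y \<Longrightarrow> x \<in> verts G \<and> y \<in> verts G \<and> x \<noteq> y \<and> adj G y x"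
  by (simp add: simple_graph_def)

lemma triangle_freeD: "triangle_free G \<Longrightarrow> adj G x y \<Longrightarrow> adj G y z \<Longrightarrow> \<not> adj G x z"
  unfolding triangle_free_def by blast

lemma bipartition_sym: "simple_graph G \<Longrightarrow> bipartition G A B \<Longrightarrow> bipartition G B A"
  unfolding bipartition_def by (auto dest: simple_graph_adjD)

lemma complete_bipartite_on_side:
  assumes "simple_graph G" "complete_bipartite_on G P" "z \<in> P"
  obtains A B where "z \<in> A" "bipartition G A B" "A \<union> B = P"
proof -
  obtain A B where AB: "bipartition G A B" "A \<union> B = P"
    using assms(2) unfolding complete_bipartite_on_iff_bipartition by blast
  show thesis
  proof (cases "z \<in> A")
    case True
    then show thesis using AB that by blast
  next
    case False
    then show thesis using AB assms(3) bipartition_sym[OF assms(1) AB(1)] that by blast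
  qed
qed

lemma bipartition_subset_neighbours: "bipartition G A B \<Longrightarrow> x \<in> A \<Longrightarrow> B \<subseteq> neighbours G x"
  unfolding bipartition_def neighbours_def by auto

lemma bipartition_neighbours_other_side:
  "bipartition G A B \<Longrightarrow> x \<in> A \<Longrightarrow> neighbours G x \<subseteq> A \<union> B \<Longrightarrow> neighbours G x \<subseteq> B"
  unfolding bipartition_def neighbours_def by auto

lemma biclique_complete_bipartite: "is_biclique G P \<Longrightarrow> complete_bipartite_on G P"
  by (simp add: is_biclique_def)

lemma complete_bipartite_in_biclique:
  assumes sg: "simple_graph G" and cb: "complete_bipartite_on G Q" and QV: "Q \<subseteq> verts G"
  obtains P where "is_biclique G P" "Q \<subseteq> P"
proof -
  define \<A> where "\<A> = {R. Q \<subseteq> R \<and> R \<subseteq> verts G \<and> complete_bipartite_on G R}"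
  have "finite \<A>"
    using sg unfolding simple_graph_def \<A>_def by (auto intro: finite_subset[of _ "Pow (verts G)"])
  moreover have "Q \<in> \<A>" using cb QV unfolding \<A>_def by blast
  ultimately obtain P where P: "P \<in> \<A>" "Q \<subseteq> P" "\<forall>R\<in>\<A>. P \<subseteq> R \<longrightarrow> P = R"
    using finite_has_maximal2 by metis
  then have "is_biclique G P" unfolding is_biclique_def \<A>_def by blast
  with P(2) show thesis using that by blast
qed

lemma complete_bipartite_closed_neighbourhood:
  assumes sg: "simple_graph G" and tri: "triangle_free G" and ne: "neighbours G x \<noteq> {}"
  shows "complete_bipartite_on G (insert x (neighbours G x))"
proof -
  have "bipartition G {x} (neighbours G x)"
    using ne unfolding bipartition_def neighbours_def
    by (auto dest: simple_graph_adjD[OF sg] triangle_freeD[OF tri])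
  then show ?thesis unfolding complete_bipartite_on_iff_bipartition by blast
qed

lemma closed_neighbourhood_in_biclique:
  assumes "simple_graph G" "triangle_free G" "neighbours G x \<noteq> {}"
  obtains R where "is_biclique G R" "insert x (neighbours G x) \<subseteq> R"
proof -
  have "insert x (neighbours G x) \<subseteq> verts G"
    using assms(3) simple_graph_adjD[OF assms(1)] unfolding neighbours_def by blast
  then show thesis
    using complete_bipartite_in_biclique[OF assms(1) complete_bipartite_closed_neighbourhood[OF assms]] that
    by blast
qed

text \<open>In a triangle-free graph a common neighbour of one side of a biclique is not adjacent
  to the other side, so it can be added to that side; maximality puts it into the biclique.\<close>
lemma biclique_contains_common_neighbour:
  assumes sg: "simple_graph G" and tri: "triangle_free G" and P: "is_biclique G P"
    and AB: "bipartition G A B" "A \<union> B = P" and y: "\<forall>b\<in>B. adj G y b"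
  shows "y \<in> P"
proof (rule ccontr)
  assume yP: "y \<notin> P"
  have B: "B \<noteq> {}" and AB_adj: "\<forall>a\<in>A. \<forall>b\<in>B. adj G a b"
    using AB(1) unfolding bipartition_def by simp_all
  obtain b where b: "b \<in> B" using B by blast
  have ya: "\<not> adj G y a" if "a \<in> A" for a
    using triangle_freeD[OF tri, of y a b] that b y AB_adj by blast
  have ay: "\<not> adj G a y" if "a \<in> A" for a
    using ya[OF that] simple_graph_adjD[OF sg, of a y] by blast
  have "y \<notin> B" using yP AB(2) by blast
  then have "bipartition G (insert y A) B"
    using AB(1) y ya ay simple_graph_adjD[OF sg, of y y] unfolding bipartition_def by auto
  then have "complete_bipartite_on G (insert y P)"
    using AB(2) unfolding complete_bipartite_on_iff_bipartition by blast
  moreover have "insert y P \<subseteq> verts G"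
    using P b y simple_graph_adjD[OF sg, of y b] unfolding is_biclique_def by blast
  ultimately show False using P yP unfolding is_biclique_def by blast
qed

text \<open>The two closed neighbourhoods cannot lie in one complete bipartite set \<open>R\<close>: some vertex
  \<open>w \<notin> P\<close> would lie on the side of \<open>R\<close> containing \<open>x\<close>, hence be a common neighbour of the side
  of \<open>P\<close> opposite to \<open>x\<close>, contradicting the maximality of \<open>P\<close>.\<close>
lemma closed_neighbourhoods_of_disjoint_bicliques_apart:
  assumes sg: "simple_graph G" and tri: "triangle_free G"
    and P: "is_biclique G P" and Q: "is_biclique G Q" and disj: "P \<inter> Q = {}"
    and x: "x \<in> P" and y: "y \<in> Q" and R: "complete_bipartite_on G R"
    and Rx: "insert x (neighbours G x) \<subseteq> R" and Ry: "insert y (neighbours G y) \<subseteq> R"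
  shows False
proof -
  obtain R1 R2 where R: "x \<in> R1" "bipartition G R1 R2" "R1 \<union> R2 = R"
    using complete_bipartite_on_side[OF sg R] Rx by blast
  have "neighbours G x \<subseteq> R2"
    using bipartition_neighbours_other_side[OF R(2,1)] Rx R(3) by blast
  obtain A B where AB: "x \<in> A" "bipartition G A B" "A \<union> B = P"
    using complete_bipartite_on_side[OF sg biclique_complete_bipartite[OF P] x] by blast
  have BR2: "B \<subseteq> R2"
    using bipartition_subset_neighbours[OF AB(2,1)] \<open>neighbours G x \<subseteq> R2\<close> by blast
  obtain w where w: "w \<in> R1" "w \<notin> P"
  proof (cases "y \<in> R1")
    case True
    then show thesis using that y disj by blast
  next
    case False
    then have "y \<in> R2" using Ry R(3) by blast
    then have Ny: "neighbours G y \<subseteq> R1"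
      using bipartition_neighbours_other_side[OF bipartition_sym[OF sg R(2)]] Ry R(3) by blast
    obtain A' B' where A'B': "y \<in> A'" "bipartition G A' B'" "A' \<union> B' = Q"
      using complete_bipartite_on_side[OF sg biclique_complete_bipartite[OF Q] y] by blast
    obtain b where "b \<in> B'" using A'B'(2) unfolding bipartition_def by blast
    then show thesis
      using that bipartition_subset_neighbours[OF A'B'(2,1)] Ny A'B'(3) disj by blast
  qed
  have "\<forall>b\<in>B. adj G w b" using R(2) w(1) BR2 unfolding bipartition_def by blast
  then show False using biclique_contains_common_neighbour[OF sg tri P AB(2,3)] w(2) by blast
qed

lemma closed_neighbourhoods_meet:
  assumes sg: "simple_graph G" and C: "complete_bipartite_on G C" and "z \<in> C" "z' \<in> C"
  shows "insert z (neighbours G z) \<inter> insert z' (neighbours G z') \<noteq> {}"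
proof -
  obtain X Y where XY: "z \<in> X" "bipartition G X Y" "X \<union> Y = C"
    using complete_bipartite_on_side[OF sg C \<open>z \<in> C\<close>] by blast
  show ?thesis
  proof (cases "z' \<in> X")
    case True
    obtain y where "y \<in> Y" using XY(2) unfolding bipartition_def by blast
    then have "y \<in> neighbours G z" "y \<in> neighbours G z'"
      using bipartition_subset_neighbours[OF XY(2)] XY(1) True by blast+
    then show ?thesis by blast
  next
    case False
    then have "z' \<in> neighbours G z"
      using bipartition_subset_neighbours[OF XY(2,1)] XY(3) \<open>z' \<in> C\<close> by blast
    then show ?thesis by blast
  qed
qed

lemma closed_neighbourhood_meets_edge:
  assumes sg: "simple_graph G" and C: "complete_bipartite_on G C" and "a \<in> C" "b \<in> C"
    and "adj G a b" and "z \<in> C"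
  shows "a \<in> insert z (neighbours G z) \<or> b \<in> insert z (neighbours G z)"
proof -
  obtain X Y where "z \<in> X" "bipartition G X Y" "X \<union> Y = C"
    using complete_bipartite_on_side[OF sg C \<open>z \<in> C\<close>] by blast
  with assms(3-5) show ?thesis unfolding bipartition_def neighbours_def by blast
qed

text \<open>Otherwise both sides of \<open>L\<close> would be contained in \<open>C\<close>, contradicting maximality of \<open>L\<close>.\<close>
lemma biclique_meeting_other_has_outer_neighbour:
  assumes sg: "simple_graph G" and C: "is_biclique G C" and L: "is_biclique G L"
    and "L \<noteq> C" and "L \<inter> C \<noteq> {}"
  shows "\<exists>z\<in>C \<inter> L. \<not> neighbours G z \<subseteq> C"
proof (rule ccontr)
  assume "\<not> ?thesis"
  then have inC: "neighbours G w \<subseteq> C" if "w \<in> C \<inter> L" for w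
    using that by blast
  obtain z where z: "z \<in> C" "z \<in> L" using \<open>L \<inter> C \<noteq> {}\<close> by blast
  obtain A B where AB: "z \<in> A" "bipartition G A B" "A \<union> B = L"
    using complete_bipartite_on_side[OF sg biclique_complete_bipartite[OF L] z(2)] by blast
  have BC: "B \<subseteq> C" using bipartition_subset_neighbours[OF AB(2,1)] inC z by blast
  obtain b where b: "b \<in> B" using AB(2) unfolding bipartition_def by blast
  have "A \<subseteq> C"
    using bipartition_subset_neighbours[OF bipartition_sym[OF sg AB(2)] b] inC[of b] BC b AB(3)
    by blast
  with BC AB(3) \<open>L \<noteq> C\<close> have "L \<subset> C" by blast
  then show False using L C unfolding is_biclique_def by blast
qed

text \<open>If all neighbours of a common vertex \<open>z\<close> stay inside one of the two bicliques, then the edge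
  from \<open>z\<close> to the opposite side of the other biclique lies in both.\<close>
lemma biclique_intersection_has_edge:
  assumes sg: "simple_graph G" and C: "is_biclique G C" and L: "is_biclique G L"
    and z: "z \<in> C \<inter> L" and N: "neighbours G z \<subseteq> C \<or> neighbours G z \<subseteq> L"
  obtains a b where "a \<in> C \<inter> L" "b \<in> C \<inter> L" "adj G a b"
proof -
  have this_edge: "\<exists>b\<in>C \<inter> L. adj G z b" if P: "is_biclique G P" "z \<in> P" and N: "neighbours G z \<subseteq> Q"
    and PQ: "C \<inter> L = P \<inter> Q" for P Q
  proof -
    obtain A B where AB: "z \<in> A" "bipartition G A B" "A \<union> B = P"
      using complete_bipartite_on_side[OF sg biclique_complete_bipartite[OF P(1)] P(2)] by blast
    obtain b where "b \<in> B" using AB(2) unfolding bipartition_def by blast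
    then show ?thesis
      using AB N PQ bipartition_subset_neighbours[OF AB(2,1)] unfolding neighbours_def by blast
  qed
  from N show thesis
  proof
    assume "neighbours G z \<subseteq> C"
    then show thesis using this_edge[OF L _ _ Int_commute] z that by blast
  next
    assume "neighbours G z \<subseteq> L"
    then show thesis using this_edge[OF C _ _ refl] z that by blast
  qed
qed

definition imgraph :: "('b \<Rightarrow> 'a) \<Rightarrow> 'b graph \<Rightarrow> 'a graph" where
  "imgraph g K = (g ` verts K, \<lambda>P Q. \<exists>x\<in>verts K. \<exists>y\<in>verts K. P = g x \<and> Q = g y \<and> adj K x y)"

lemma verts_imgraph: "verts (imgraph g K) = g ` verts K"
  by (simp add: imgraph_def verts_def)

lemma adj_imgraph:
  "inj_on g (verts K) \<Longrightarrow> x \<in> verts K \<Longrightarrow> y \<in> verts K \<Longrightarrow> adj (imgraph g K) (g x) (g y) \<longleftrightarrow> adj K x y"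
  by (auto simp: imgraph_def adj_def verts_def inj_on_def)

lemma adj_imgraphE:
  assumes "adj (imgraph g K) P Q"
  obtains x y where "x \<in> verts K" "y \<in> verts K" "P = g x" "Q = g y" "adj K x y"
  using assms by (auto simp: imgraph_def adj_def verts_def)

lemma isomorphic_imgraph: "inj_on g (verts K) \<Longrightarrow> isomorphic (imgraph g K) K"
  unfolding isomorphic_def verts_imgraph
  by (rule exI[of _ "the_inv_into (verts K) g"])
    (auto simp: bij_betw_the_inv_into inj_on_imp_bij_betw adj_imgraph the_inv_into_f_f)

lemma subgraph_imgraph:
  assumes K: "simple_graph K" and inj: "inj_on g (verts K)"
    and V: "g ` verts K \<subseteq> verts W" and E: "\<And>x y. adj K x y \<Longrightarrow> adj W (g x) (g y)"
  shows "subgraph (imgraph g K) W"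
  unfolding subgraph_def simple_graph_def
proof (intro conjI allI impI)
  show "finite (verts (imgraph g K))" using K by (simp add: verts_imgraph simple_graph_def)
  show "verts (imgraph g K) \<subseteq> verts W" using V by (simp add: verts_imgraph)
  fix P Q assume "adj (imgraph g K) P Q"
  then obtain x y where xy: "x \<in> verts K" "y \<in> verts K" "P = g x" "Q = g y" "adj K x y"
    by (rule adj_imgraphE)
  have "x \<noteq> y" "adj K y x" using simple_graph_adjD[OF K xy(5)] by simp_all
  then show "adj W P Q" "P \<in> verts (imgraph g K)" "Q \<in> verts (imgraph g K)" "P \<noteq> Q"
    "adj (imgraph g K) Q P"
    using xy E inj adj_imgraph[OF inj xy(2,1)] by (auto simp: verts_imgraph inj_on_def)
qed

lemma verts_KB: "verts (KB G) = {P. is_biclique G P}"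
  by (simp add: KB_def verts_def)

lemma adj_KB: "adj (KB G) P Q \<longleftrightarrow> is_biclique G P \<and> is_biclique G Q \<and> P \<noteq> Q \<and> P \<inter> Q \<noteq> {}"
  by (simp add: KB_def adj_def)

lemma subgraph_KB_imgraph:
  assumes "simple_graph K" and inj: "inj_on g (verts K)"
    and "\<And>x. x \<in> verts K \<Longrightarrow> is_biclique G (g x)"
    and meet: "\<And>x y. adj K x y \<Longrightarrow> g x \<inter> g y \<noteq> {}"
  shows "subgraph (imgraph g K) (KB G)"
proof (rule subgraph_imgraph)
  fix x y assume xy: "adj K x y"
  with simple_graph_adjD[OF \<open>simple_graph K\<close> xy] inj have "g x \<noteq> g y"
    by (auto simp: inj_on_def)
  then show "adj (KB G) (g x) (g y)"
    using assms(3) simple_graph_adjD[OF \<open>simple_graph K\<close> xy] meet[OF xy] by (simp add: adj_KB)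
qed (use assms in \<open>auto simp: verts_KB\<close>)

lemma verts_D: "verts (D n) = {0..2*n}"
  by (simp add: D_def verts_def)

lemma adj_D: "adj (D n) x y \<longleftrightarrow> (x = 0 \<and> 1 \<le> y \<and> y \<le> n) \<or> (y = 0 \<and> 1 \<le> x \<and> x \<le> n) \<or>
    (1 \<le> x \<and> x \<le> n \<and> y = n + x) \<or> (1 \<le> y \<and> y \<le> n \<and> x = n + y)"
  by (simp add: D_def adj_def)

lemma verts_induced: "verts (induced G S) = S"
  by (simp add: induced_def verts_def)

lemma adj_induced: "adj (induced G S) x y \<longleftrightarrow> x \<in> S \<and> y \<in> S \<and> adj G x y"
  by (simp add: induced_def adj_def)

lemma verts_square: "verts (square H) = verts H"
  by (simp add: square_def verts_def)

lemma adj_square: "adj (square H) x y \<longleftrightarrow> x \<in> verts H \<and> y \<in> verts H \<and> x \<noteq> y \<and>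
    (adj H x y \<or> (\<exists>z \<in> verts H. adj H x z \<and> adj H z y))"
  by (simp add: square_def adj_def verts_def)

lemma simple_graph_induced: "simple_graph G \<Longrightarrow> S \<subseteq> verts G \<Longrightarrow> simple_graph (induced G S)"
  unfolding simple_graph_def verts_induced adj_induced by (auto intro: finite_subset)

lemma simple_graph_square:
  assumes H: "simple_graph H" shows "simple_graph (square H)"
proof -
  have sym: "adj H y x" if "adj H x y" for x y
    using simple_graph_adjD[OF H that] by blast
  have "adj (square H) y x" if "adj (square H) x y" for x y
    using that sym unfolding adj_square by blast
  then show ?thesis using H unfolding simple_graph_def verts_square adj_square by blast
qed

lemma simple_graph_D: "simple_graph (D n)"
  unfolding simple_graph_def verts_D adj_D by auto

lemma simple_graph_D_minus: "simple_graph (D_minus n)"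
  unfolding D_minus_def by (rule simple_graph_induced[OF simple_graph_D]) blast

lemma verts_square_D: "verts (square (D n)) = {0..2*n}"
  by (simp add: verts_square verts_D)

lemma verts_square_D_minus: "verts (square (D_minus n)) = {0..<2*n}"
  by (auto simp: verts_square D_minus_def verts_induced verts_D)

lemma adj_square_DE:
  assumes "adj (square (D n)) x y"
  obtains "x = 0" | "y = 0" | "x \<in> {1..n}" "y \<in> {1..n}"
    | "x \<in> {1..n}" "y = n + x" | "y \<in> {1..n}" "x = n + y"
proof -
  have "adj (D n) x y \<or> (\<exists>z. adj (D n) x z \<and> adj (D n) z y)" "x \<noteq> y"
    using assms unfolding adj_square by auto
  moreover have "x = 0 \<or> y = 0 \<or> x \<in> {1..n} \<and> y \<in> {1..n}"
    if "adj (D n) x z" "adj (D n) z y" "x \<noteq> y" for z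
    using that unfolding adj_D by (elim disjE conjE; simp; linarith)
  ultimately show thesis using that unfolding adj_D by (elim disjE exE conjE; force)
qed

lemma adj_square_D_minus_imp_adj_square_D:
  "adj (square (D_minus n)) x y \<Longrightarrow> adj (square (D n)) x y"
  unfolding adj_square D_minus_def verts_induced adj_induced by blast

lemma adj_square_D_centre: "x \<in> {1..2*n} \<Longrightarrow> adj (square (D n)) 0 x"
  unfolding adj_square verts_D adj_D
  by (cases "x \<le> n") (auto intro!: bexI[of _ "x - n"])

lemma adj_square_D_minus_centre: "x \<in> {1..<2*n} \<Longrightarrow> adj (square (D_minus n)) 0 x"
  unfolding adj_square D_minus_def verts_induced adj_induced verts_D adj_D
  by (cases "x \<le> n") (auto intro!: bexI[of _ "x - n"])

definition D_labelling :: "nat \<Rightarrow> 'b \<Rightarrow> (nat \<Rightarrow> 'b) \<Rightarrow> (nat \<Rightarrow> 'b) \<Rightarrow> nat \<Rightarrow> 'b" where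
  "D_labelling n c m l x = (if x = 0 then c else if x \<le> n then m x else l (x - n))"

lemma D_labelling_simps:
  "D_labelling n c m l 0 = c"
  "i \<in> {1..n} \<Longrightarrow> D_labelling n c m l i = m i"
  "i \<in> {1..n} \<Longrightarrow> D_labelling n c m l (n + i) = l i"
  by (auto simp: D_labelling_def)

lemma D_vertex_cases:
  fixes x n :: nat
  assumes "x \<le> 2*n"
  obtains (centre) "x = 0" | (inner) "x \<in> {1..n}" | (outer) j where "j \<in> {1..n}" "x = n + j"
proof (cases "x \<le> n")
  case False
  then show thesis using assms outer[of "x - n"] by auto
qed (use centre inner in \<open>cases "x = 0"; auto\<close>)

lemma D_labelling_meets:
  fixes C :: "'a set"
  assumes CML: "\<And>i. i \<in> {1..n} \<Longrightarrow> C \<inter> M i \<noteq> {} \<and> C \<inter> L i \<noteq> {} \<and> M i \<inter> L i \<noteq> {}"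
    and MM: "\<And>i j. i \<in> {1..n} \<Longrightarrow> j \<in> {1..n} \<Longrightarrow> M i \<inter> M j \<noteq> {}"
    and xy: "adj (square (D n)) x y"
  shows "D_labelling n C M L x \<inter> D_labelling n C M L y \<noteq> {}"
proof -
  have centre: "C \<inter> D_labelling n C M L z \<noteq> {}" if "z \<noteq> 0" "z \<le> 2*n" for z
    using that(2) by (cases rule: D_vertex_cases) (use that(1) CML in \<open>auto simp: D_labelling_simps\<close>)
  have "x \<le> 2*n" "y \<le> 2*n" "x \<noteq> y"
    using simple_graph_adjD[OF simple_graph_square[OF simple_graph_D] xy] by (simp_all add: verts_square_D)
  with xy show ?thesis
  proof (cases rule: adj_square_DE)
    case 1
    then show ?thesis using centre \<open>y \<le> 2*n\<close> \<open>x \<noteq> y\<close> by (simp add: D_labelling_simps)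
  next
    case 2
    then show ?thesis using centre \<open>x \<le> 2*n\<close> \<open>x \<noteq> y\<close> by (simp add: D_labelling_simps Int_commute)
  next
    case 3
    then show ?thesis using MM by (simp add: D_labelling_simps)
  next
    case 4
    then show ?thesis using CML[of x] by (simp add: D_labelling_simps)
  next
    case 5
    then show ?thesis using CML[of y] by (simp add: D_labelling_simps Int_commute)
  qed
qed

lemma inj_on_D_labelling:
  fixes C :: "'a set"
  assumes V: "V \<subseteq> {0..2*n}"
    and C: "\<And>i. i \<in> {1..n} \<Longrightarrow> M i \<noteq> C \<and> L i \<noteq> C"
    and M: "inj_on M {1..n}" and L: "inj_on L {1..n}"
    and M_L_distinct: "\<And>i j. i \<in> {1..n} \<Longrightarrow> j \<in> {1..n} \<Longrightarrow> n + j \<in> V \<Longrightarrow> M i \<noteq> L j"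
  shows "inj_on (D_labelling n C M L) V"
proof (rule inj_onI)
  fix x y assume xy: "x \<in> V" "y \<in> V" and eq: "D_labelling n C M L x = D_labelling n C M L y"
  have "x \<le> 2*n" "y \<le> 2*n" using xy V by auto
  then show "x = y"
  proof (cases rule: D_vertex_cases[OF \<open>x \<le> 2*n\<close>]; cases rule: D_vertex_cases[OF \<open>y \<le> 2*n\<close>])
  qed (use eq xy C M_L_distinct M_L_distinct[THEN not_sym] in \<open>auto simp: D_labelling_simps dest: inj_onD[OF M] inj_onD[OF L]\<close>)
qed

lemma D_labelling_mem:
  assumes "c \<in> S" "\<And>i. i \<in> {1..n} \<Longrightarrow> m i \<in> S \<and> l i \<in> S" "x \<le> 2*n"
  shows "D_labelling n c m l x \<in> S"
  using assms(3) by (cases rule: D_vertex_cases) (use assms in \<open>auto simp: D_labelling_simps\<close>)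

lemma exists_KB_subgraph_isomorphic:
  assumes K: "simple_graph K" and inj: "inj_on g (verts K)"
    and "\<And>x. x \<in> verts K \<Longrightarrow> is_biclique G (g x)"
    and "\<And>x y. adj K x y \<Longrightarrow> g x \<inter> g y \<noteq> {}"
    and "g c = C" and leaves: "\<And>i. i \<in> I \<Longrightarrow> \<exists>x. adj K c x \<and> g x = L i"
  shows "\<exists>H. subgraph H (KB G) \<and> isomorphic H K \<and> (\<forall>i\<in>I. adj H C (L i))"
proof (intro exI conjI ballI)
  show "subgraph (imgraph g K) (KB G)" using subgraph_KB_imgraph[OF K inj] assms(3,4) by blast
  show "isomorphic (imgraph g K) K" using isomorphic_imgraph[OF inj] .
  fix i assume "i \<in> I"
  then obtain x where "adj K c x" "g x = L i" using leaves by blast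
  moreover have "c \<in> verts K" "x \<in> verts K" using simple_graph_adjD[OF K \<open>adj K c x\<close>] by simp_all
  ultimately show "adj (imgraph g K) C (L i)"
    using adj_imgraph[OF inj] \<open>g c = C\<close> by metis
qed

definition biclique_star :: "'a graph \<Rightarrow> 'a set \<Rightarrow> (nat \<Rightarrow> 'a set) \<Rightarrow> nat \<Rightarrow> bool" where
  "biclique_star G C L n \<longleftrightarrow> is_biclique G C \<and>
     (\<forall>i\<in>{1..n}. is_biclique G (L i) \<and> L i \<inter> C \<noteq> {} \<and> L i \<noteq> C) \<and>
     (\<forall>i\<in>{1..n}. \<forall>j\<in>{1..n}. i \<noteq> j \<longrightarrow> L i \<inter> L j = {})"

definition square_D_extension :: "'a graph \<Rightarrow> 'a set \<Rightarrow> (nat \<Rightarrow> 'a set) \<Rightarrow> nat \<Rightarrow> bool" where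
  "square_D_extension G C L n \<longleftrightarrow> (\<exists>H. subgraph H (KB G) \<and> (\<forall>i\<in>{1..n}. adj H C (L i)) \<and>
     (isomorphic H (square (D n)) \<or> isomorphic H (square (D_minus n))))"

lemma biclique_star_inj_on:
  assumes "biclique_star G C L n" shows "inj_on L {1..n}"
proof (rule inj_onI)
  fix i j assume ij: "i \<in> {1..n}" "j \<in> {1..n}" "L i = L j"
  show "i = j"
  proof (rule ccontr)
    assume "i \<noteq> j"
    then have "L i \<inter> L j = {}" "L i \<inter> C \<noteq> {}" using assms ij(1,2) unfolding biclique_star_def by blast+
    with ij(3) show False by simp
  qed
qed

lemma biclique_star_reindex:
  assumes "biclique_star G C L n" "bij_betw p {1..n} {1..n}"
  shows "biclique_star G C (L \<circ> p) n"
proof -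
  have p: "p i \<in> {1..n}" if "i \<in> {1..n}" for i
    using bij_betwE[OF assms(2)] that by blast
  have "p i \<noteq> p j" if "i \<in> {1..n}" "j \<in> {1..n}" "i \<noteq> j" for i j
    using inj_onD[OF bij_betw_imp_inj_on[OF assms(2)]] that by blast
  with p assms(1) show ?thesis unfolding biclique_star_def comp_apply by blast
qed

lemma square_D_extension_reindex:
  assumes "square_D_extension G C (L \<circ> p) n" "bij_betw p {1..n} {1..n}"
  shows "square_D_extension G C L n"
proof -
  have "\<exists>j\<in>{1..n}. i = p j" if "i \<in> {1..n}" for i
    using that bij_betw_imp_surj_on[OF assms(2)] by blast
  then show ?thesis using assms(1) unfolding square_D_extension_def comp_apply by metis
qed

lemma biclique_star_neighbourhood_bicliques:
  assumes sg: "simple_graph G" and tri: "triangle_free G" and star: "biclique_star G C L n"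
    and I: "I \<subseteq> {1..n}" and z: "\<And>i. i \<in> I \<Longrightarrow> z i \<in> C \<inter> L i \<and> \<not> neighbours G (z i) \<subseteq> C"
  obtains M where
    "\<And>i. i \<in> I \<Longrightarrow> is_biclique G (M i) \<and> insert (z i) (neighbours G (z i)) \<subseteq> M i \<and> M i \<noteq> C"
    "\<And>i j. i \<in> I \<Longrightarrow> j \<in> {1..n} \<Longrightarrow> i \<noteq> j \<Longrightarrow> M i \<noteq> L j"
    "inj_on M I" "\<And>i j. i \<in> I \<Longrightarrow> j \<in> I \<Longrightarrow> M i \<inter> M j \<noteq> {}"
proof -
  have L: "\<And>i. i \<in> {1..n} \<Longrightarrow> is_biclique G (L i)"
    and disj: "\<And>i j. i \<in> {1..n} \<Longrightarrow> j \<in> {1..n} \<Longrightarrow> i \<noteq> j \<Longrightarrow> L i \<inter> L j = {}"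
    and C: "is_biclique G C"
    using star unfolding biclique_star_def by auto
  have "\<exists>R. is_biclique G R \<and> insert (z i) (neighbours G (z i)) \<subseteq> R" if "i \<in> I" for i
  proof -
    have "neighbours G (z i) \<noteq> {}" using z[OF that] by blast
    then obtain R where "is_biclique G R" "insert (z i) (neighbours G (z i)) \<subseteq> R"
      by (rule closed_neighbourhood_in_biclique[OF sg tri])
    then show ?thesis by blast
  qed
  then have R: "\<forall>i\<in>I. \<exists>R. is_biclique G R \<and> insert (z i) (neighbours G (z i)) \<subseteq> R" by blast
  obtain M where M: "\<And>i. i \<in> I \<Longrightarrow> is_biclique G (M i) \<and> insert (z i) (neighbours G (z i)) \<subseteq> M i"
    using bchoice[OF R] by blast
  show thesis
  proof (rule that[of M])
    show "is_biclique G (M i) \<and> insert (z i) (neighbours G (z i)) \<subseteq> M i \<and> M i \<noteq> C" if "i \<in> I" for i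
      using M[OF that] z[OF that] by blast
    show "M i \<noteq> L j" if "i \<in> I" "j \<in> {1..n}" "i \<noteq> j" for i j
      using M[OF that(1)] z[OF that(1)] disj[OF _ that(2,3)] I that(1) by blast
    show "inj_on M I"
    proof (rule inj_onI)
      fix i j assume ij: "i \<in> I" "j \<in> I" "M i = M j"
      show "i = j"
      proof (rule ccontr)
        assume "i \<noteq> j"
        have i: "i \<in> {1..n}" and j: "j \<in> {1..n}" using ij I by blast+
        have "insert (z j) (neighbours G (z j)) \<subseteq> M i" using M[OF ij(2)] ij(3) by simp
        then show False
          using closed_neighbourhoods_of_disjoint_bicliques_apart[OF sg tri L[OF i] L[OF j]
              disj[OF i j \<open>i \<noteq> j\<close>] _ _ biclique_complete_bipartite]
            M[OF ij(1)] z[OF ij(1)] z[OF ij(2)] by blast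
      qed
    qed
    show "M i \<inter> M j \<noteq> {}" if "i \<in> I" "j \<in> I" for i j
      using closed_neighbourhoods_meet[OF sg biclique_complete_bipartite[OF C], of "z i" "z j"]
        M[OF that(1)] M[OF that(2)] z[OF that(1)] z[OF that(2)] by blast
  qed
qed

lemma square_D_extension_of_D_labelling:
  assumes C: "is_biclique G C"
    and bicliques: "\<And>i. i \<in> {1..n} \<Longrightarrow> is_biclique G (M i) \<and> is_biclique G (L i)"
    and not_C: "\<And>i. i \<in> {1..n} \<Longrightarrow> M i \<noteq> C \<and> L i \<noteq> C"
    and "inj_on M {1..n}" "inj_on L {1..n}"
    and M_L: "\<And>i j. i \<in> {1..n} \<Longrightarrow> j \<in> {1..n} \<Longrightarrow> M i \<noteq> L j"
    and meets: "\<And>i. i \<in> {1..n} \<Longrightarrow> C \<inter> M i \<noteq> {} \<and> C \<inter> L i \<noteq> {} \<and> M i \<inter> L i \<noteq> {}"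
    and MM: "\<And>i j. i \<in> {1..n} \<Longrightarrow> j \<in> {1..n} \<Longrightarrow> M i \<inter> M j \<noteq> {}"
  shows "square_D_extension G C L n"
proof -
  define g where "g = D_labelling n C M L"
  let ?K = "square (D n)"
  have M_L': "M i \<noteq> L j" if "i \<in> {1..n}" "j \<in> {1..n}" "n + j \<in> {0..2*n}" for i j
    using M_L that by blast
  have inj: "inj_on g (verts ?K)"
    unfolding g_def verts_square_D
    by (rule inj_on_D_labelling[OF order_refl not_C \<open>inj_on M {1..n}\<close> \<open>inj_on L {1..n}\<close> M_L'])
  have bicliques: "is_biclique G (g x)" if "x \<in> verts ?K" for x
  proof -
    have "g x \<in> {P. is_biclique G P}"
      unfolding g_def using that C bicliques by (intro D_labelling_mem) (auto simp: verts_square_D)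
    then show ?thesis by simp
  qed
  have meets: "g x \<inter> g y \<noteq> {}" if "adj ?K x y" for x y
    unfolding g_def by (rule D_labelling_meets[OF meets MM that])
  have g0: "g 0 = C" by (simp add: g_def D_labelling_simps)
  have leaves: "\<exists>x. adj ?K 0 x \<and> g x = L i" if "i \<in> {1..n}" for i
  proof (intro exI conjI)
    show "adj ?K 0 (n + i)" using that by (intro adj_square_D_centre) auto
    show "g (n + i) = L i" using that by (simp add: g_def D_labelling_simps)
  qed
  have "\<exists>H. subgraph H (KB G) \<and> isomorphic H ?K \<and> (\<forall>i\<in>{1..n}. adj H C (L i))"
    by (rule exists_KB_subgraph_isomorphic[OF simple_graph_square[OF simple_graph_D] inj bicliques meets g0 leaves])
  then show ?thesis unfolding square_D_extension_def by blast
qed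

text \<open>Here \<open>u\<^sub>n\<close> is labelled by \<open>L n\<close> itself, so there is no biclique left for \<open>w\<^sub>n\<close>.\<close>
lemma square_D_extension_of_D_minus_labelling:
  assumes n: "n \<ge> 1" and C: "is_biclique G C"
    and M: "\<And>i. i \<in> {1..<n} \<Longrightarrow> is_biclique G (M i) \<and> M i \<noteq> C"
    and L: "\<And>i. i \<in> {1..n} \<Longrightarrow> is_biclique G (L i) \<and> L i \<noteq> C \<and> C \<inter> L i \<noteq> {}"
    and "inj_on M {1..<n}" "inj_on L {1..n}"
    and M_L: "\<And>i j. i \<in> {1..<n} \<Longrightarrow> j \<in> {1..n} \<Longrightarrow> M i \<noteq> L j"
    and meets: "\<And>i. i \<in> {1..<n} \<Longrightarrow> C \<inter> M i \<noteq> {} \<and> M i \<inter> L i \<noteq> {} \<and> M i \<inter> L n \<noteq> {}"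
    and MM: "\<And>i j. i \<in> {1..<n} \<Longrightarrow> j \<in> {1..<n} \<Longrightarrow> M i \<inter> M j \<noteq> {}"
  shows "square_D_extension G C L n"
proof -
  define M' where "M' = M(n := L n)"
  have nn: "n \<in> {1..n}" and split: "\<And>i. i \<in> {1..n} \<Longrightarrow> i = n \<or> i \<in> {1..<n}" using n by auto
  have M': "M' n = L n" "\<And>i. i \<in> {1..<n} \<Longrightarrow> M' i = M i" by (auto simp: M'_def)
  define g where "g = D_labelling n C M' L"
  let ?K = "square (D_minus n)"
  have notin: "L n \<notin> M ` {1..<n}" using M_L[OF _ nn] by blast
  have "{1..n} = insert n {1..<n}" using n by auto
  moreover have "inj_on M' {1..<n}"
    unfolding M'_def using \<open>inj_on M {1..<n}\<close> notin by (rule inj_on_fun_updI)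
  moreover have "M' n \<notin> M' ` {1..<n}" using notin by (simp add: M'_def fun_upd_image)
  ultimately have inj_M': "inj_on M' {1..n}" by simp
  have not_C: "M' i \<noteq> C \<and> L i \<noteq> C" if "i \<in> {1..n}" for i
    using split[OF that] M M' L[OF that] by auto
  have M'_L: "M' i \<noteq> L j" if "i \<in> {1..n}" "j \<in> {1..n}" "n + j \<in> {0..<2*n}" for i j
    using split[OF that(1)] M' M_L[OF _ that(2)] inj_onD[OF \<open>inj_on L {1..n}\<close> _ nn that(2)] that(3)
    by fastforce
  have "{0..<2*n} \<subseteq> {0..2*n}" by auto
  then have inj: "inj_on g (verts ?K)"
    unfolding g_def verts_square_D_minus
    by (rule inj_on_D_labelling[OF _ not_C inj_M' \<open>inj_on L {1..n}\<close> M'_L])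
  have bicliques: "is_biclique G (g x)" if "x \<in> verts ?K" for x
  proof -
    have "M' i \<in> {P. is_biclique G P} \<and> L i \<in> {P. is_biclique G P}" if "i \<in> {1..n}" for i
    proof (cases "i = n")
      case True
      then show ?thesis using M'(1) L[OF that] by simp
    next
      case False
      then have "i \<in> {1..<n}" using that by simp
      then show ?thesis using M'(2) M L[OF that] by simp
    qed
    then have "g x \<in> {P. is_biclique G P}"
      unfolding g_def using that C by (intro D_labelling_mem) (auto simp: verts_square_D_minus)
    then show ?thesis by simp
  qed
  have meets: "g x \<inter> g y \<noteq> {}" if "adj ?K x y" for x y
  proof -
    have M'_meets: "C \<inter> M' i \<noteq> {} \<and> M' i \<inter> L i \<noteq> {} \<and> M' i \<inter> L n \<noteq> {}" if "i \<in> {1..n}" for i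
    proof (cases "i = n")
      case True
      then show ?thesis using M'(1) L[OF nn] by auto
    next
      case False
      then have "i \<in> {1..<n}" using that by simp
      then show ?thesis using M'(2) meets by simp
    qed
    then have "C \<inter> M' i \<noteq> {} \<and> C \<inter> L i \<noteq> {} \<and> M' i \<inter> L i \<noteq> {}" if "i \<in> {1..n}" for i
      using L[OF that] that by blast
    moreover have "M' i \<inter> M' j \<noteq> {}" if "i \<in> {1..n}" "j \<in> {1..n}" for i j
    proof (cases "i = n \<or> j = n")
      case True
      then show ?thesis using M'_meets[OF that(1)] M'_meets[OF that(2)] M'(1) by (auto simp: Int_commute)
    next
      case False
      then have "i \<in> {1..<n}" "j \<in> {1..<n}" using that by auto
      then show ?thesis using MM M'(2) by simp
    qed
    ultimately show ?thesis
      unfolding g_def by (rule D_labelling_meets[OF _ _ adj_square_D_minus_imp_adj_square_D[OF that]])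
  qed
  have g0: "g 0 = C" by (simp add: g_def D_labelling_simps)
  have leaves: "\<exists>x. adj ?K 0 x \<and> g x = L i" if "i \<in> {1..n}" for i
  proof (cases "i = n")
    case True
    have "adj ?K 0 n" using n by (intro adj_square_D_minus_centre) auto
    moreover have "g n = L n" using nn M' by (simp add: g_def D_labelling_simps)
    ultimately show ?thesis using True by blast
  next
    case False
    then have "adj ?K 0 (n + i)" using that by (intro adj_square_D_minus_centre) auto
    moreover have "g (n + i) = L i" using that by (simp add: g_def D_labelling_simps)
    ultimately show ?thesis by blast
  qed
  have "\<exists>H. subgraph H (KB G) \<and> isomorphic H ?K \<and> (\<forall>i\<in>{1..n}. adj H C (L i))"
    by (rule exists_KB_subgraph_isomorphic[OF simple_graph_square[OF simple_graph_D_minus] inj bicliques meets g0 leaves])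
  then show ?thesis unfolding square_D_extension_def by blast
qed

lemma square_D_extension_of_branching_leaves:
  assumes sg: "simple_graph G" and tri: "triangle_free G" and star: "biclique_star G C L n"
    and branch: "\<And>i. i \<in> {1..n} \<Longrightarrow>
      \<exists>z\<in>C \<inter> L i. \<not> neighbours G z \<subseteq> C \<and> \<not> neighbours G z \<subseteq> L i"
  shows "square_D_extension G C L n"
proof -
  have "\<forall>i\<in>{1..n}. \<exists>z. z \<in> C \<inter> L i \<and> \<not> neighbours G z \<subseteq> C \<and> \<not> neighbours G z \<subseteq> L i"
    using branch by blast
  from bchoice[OF this] obtain z where z: "\<And>i. i \<in> {1..n} \<Longrightarrow>
      z i \<in> C \<inter> L i \<and> \<not> neighbours G (z i) \<subseteq> C \<and> \<not> neighbours G (z i) \<subseteq> L i"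
    by blast
  then have outer: "\<And>i. i \<in> {1..n} \<Longrightarrow> z i \<in> C \<inter> L i \<and> \<not> neighbours G (z i) \<subseteq> C"
    by blast
  obtain M where M: "\<And>i. i \<in> {1..n} \<Longrightarrow>
        is_biclique G (M i) \<and> insert (z i) (neighbours G (z i)) \<subseteq> M i \<and> M i \<noteq> C"
      and M_L: "\<And>i j. i \<in> {1..n} \<Longrightarrow> j \<in> {1..n} \<Longrightarrow> i \<noteq> j \<Longrightarrow> M i \<noteq> L j"
      and "inj_on M {1..n}" and MM: "\<And>i j. i \<in> {1..n} \<Longrightarrow> j \<in> {1..n} \<Longrightarrow> M i \<inter> M j \<noteq> {}"
    using biclique_star_neighbourhood_bicliques[OF sg tri star order_refl outer] by blast
  have L: "is_biclique G C" "\<And>i. i \<in> {1..n} \<Longrightarrow> is_biclique G (L i) \<and> L i \<inter> C \<noteq> {} \<and> L i \<noteq> C"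
    using star unfolding biclique_star_def by auto
  have "M i \<noteq> L j" if "i \<in> {1..n}" "j \<in> {1..n}" for i j
    using M_L[OF that] M[OF that(1)] z[OF that(1)] by (cases "i = j") blast+
  moreover have "C \<inter> M i \<noteq> {} \<and> C \<inter> L i \<noteq> {} \<and> M i \<inter> L i \<noteq> {}" if "i \<in> {1..n}" for i
    using M[OF that] z[OF that] L(2)[OF that] by blast
  ultimately show ?thesis
    using square_D_extension_of_D_labelling[OF L(1) _ _ \<open>inj_on M {1..n}\<close> biclique_star_inj_on[OF star] _ _ MM]
      M L(2) by blast
qed

lemma square_D_extension_of_edge_in_last_leaf:
  assumes sg: "simple_graph G" and tri: "triangle_free G" and star: "biclique_star G C L n"
    and n: "n \<ge> 1" and a: "a \<in> C \<inter> L n" and b: "b \<in> C \<inter> L n" and ab: "adj G a b"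
  shows "square_D_extension G C L n"
proof -
  have C: "is_biclique G C"
    and L: "\<And>i. i \<in> {1..n} \<Longrightarrow> is_biclique G (L i) \<and> L i \<inter> C \<noteq> {} \<and> L i \<noteq> C"
    and disj: "\<And>i j. i \<in> {1..n} \<Longrightarrow> j \<in> {1..n} \<Longrightarrow> i \<noteq> j \<Longrightarrow> L i \<inter> L j = {}"
    using star unfolding biclique_star_def by auto
  have nn: "n \<in> {1..n}" using n by simp
  have "\<forall>i\<in>{1..<n}. \<exists>z. z \<in> C \<inter> L i \<and> \<not> neighbours G z \<subseteq> C"
    using biclique_meeting_other_has_outer_neighbour[OF sg C] L by fastforce
  from bchoice[OF this] obtain z
    where outer: "\<And>i. i \<in> {1..<n} \<Longrightarrow> z i \<in> C \<inter> L i \<and> \<not> neighbours G (z i) \<subseteq> C"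
    by blast
  have I: "{1..<n} \<subseteq> {1..n}" by auto
  obtain M where M: "\<And>i. i \<in> {1..<n} \<Longrightarrow>
        is_biclique G (M i) \<and> insert (z i) (neighbours G (z i)) \<subseteq> M i \<and> M i \<noteq> C"
      and M_L: "\<And>i j. i \<in> {1..<n} \<Longrightarrow> j \<in> {1..n} \<Longrightarrow> i \<noteq> j \<Longrightarrow> M i \<noteq> L j"
      and "inj_on M {1..<n}" and MM: "\<And>i j. i \<in> {1..<n} \<Longrightarrow> j \<in> {1..<n} \<Longrightarrow> M i \<inter> M j \<noteq> {}"
    using biclique_star_neighbourhood_bicliques[OF sg tri star I outer] by blast
  have M_Ln: "M i \<inter> L n \<noteq> {}" if "i \<in> {1..<n}" for i
    using closed_neighbourhood_meets_edge[OF sg biclique_complete_bipartite[OF C] _ _ ab, of "z i"]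
      a b outer[OF that] M[OF that] by blast
  have "M i \<noteq> L j" if "i \<in> {1..<n}" "j \<in> {1..n}" for i j
  proof (cases "i = j")
    case True
    then show ?thesis using M_Ln[OF that(1)] disj[OF that(2) nn] that(1) by auto
  qed (use M_L that in blast)
  moreover have "C \<inter> M i \<noteq> {} \<and> M i \<inter> L i \<noteq> {} \<and> M i \<inter> L n \<noteq> {}" if "i \<in> {1..<n}" for i
    using M[OF that] outer[OF that] M_Ln[OF that] by blast
  moreover have "is_biclique G (L i) \<and> L i \<noteq> C \<and> C \<inter> L i \<noteq> {}" if "i \<in> {1..n}" for i
    using L[OF that] by (simp add: Int_commute)
  ultimately show ?thesis
    using square_D_extension_of_D_minus_labelling[OF n C _ _ \<open>inj_on M {1..<n}\<close>
        biclique_star_inj_on[OF star] _ _ MM] M by blast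
qed

lemma biclique_star_square_D_extension:
  assumes sg: "simple_graph G" and tri: "triangle_free G" and star: "biclique_star G C L n"
  shows "square_D_extension G C L n"
proof (cases "\<forall>i\<in>{1..n}. \<exists>z\<in>C \<inter> L i. \<not> neighbours G z \<subseteq> C \<and> \<not> neighbours G z \<subseteq> L i")
  case True
  then show ?thesis using square_D_extension_of_branching_leaves[OF sg tri star] by blast
next
  case False
  then obtain k where k: "k \<in> {1..n}" and N: "\<forall>z\<in>C \<inter> L k. neighbours G z \<subseteq> C \<or> neighbours G z \<subseteq> L k"
    by blast
  have Cb: "is_biclique G C" and Lk: "is_biclique G (L k)" "L k \<inter> C \<noteq> {}"
    using star k unfolding biclique_star_def by auto
  then obtain z where z: "z \<in> C \<inter> L k" by blast
  obtain a b where ab: "a \<in> C \<inter> L k" "b \<in> C \<inter> L k" "adj G a b"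
    using biclique_intersection_has_edge[OF sg Cb Lk(1) z] N z by blast
  define p where "p = transpose k n"
  have p: "bij_betw p {1..n} {1..n}" using k unfolding p_def by simp
  have "(L \<circ> p) n = L k" by (simp add: p_def)
  with ab have "square_D_extension G C (L \<circ> p) n"
    using square_D_extension_of_edge_in_last_leaf[OF sg tri biclique_star_reindex[OF star p]] k by simp
  then show ?thesis using square_D_extension_reindex[OF _ p] by blast
qed

lemma induced_star_in_KB:
  assumes S: "S \<subseteq> verts (KB G)" and iso: "isomorphic (induced (KB G) S) (star n)"
  obtains C L where "biclique_star G C L n" "S = insert C (L ` {1..n})"
    "\<And>P Q. adj (induced (KB G) S) P Q \<Longrightarrow> P = C \<and> Q \<in> L ` {1..n} \<or> Q = C \<and> P \<in> L ` {1..n}"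
proof -
  have adj_star: "adj (star n) i j \<longleftrightarrow> i \<in> {0..n} \<and> j \<in> {0..n} \<and> (i = 0 \<and> j \<noteq> 0 \<or> j = 0 \<and> i \<noteq> 0)"
    for i j by (simp add: star_def adj_def)
  obtain f where f: "bij_betw f S {0..n}"
    and f_adj: "\<And>P Q. P \<in> S \<Longrightarrow> Q \<in> S \<Longrightarrow> adj (KB G) P Q \<longleftrightarrow> adj (star n) (f P) (f Q)"
    using iso unfolding isomorphic_def verts_induced adj_induced by (auto simp: star_def verts_def)
  define h where "h = inv_into S f"
  have h: "\<And>i. i \<in> {0..n} \<Longrightarrow> h i \<in> S \<and> f (h i) = i" and hf: "\<And>P. P \<in> S \<Longrightarrow> h (f P) = P"
    using f unfolding h_def by (auto simp: bij_betw_def inv_into_into f_inv_into_f)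
  have fS: "\<And>P. P \<in> S \<Longrightarrow> f P \<in> {0..n}" using f by (auto simp: bij_betw_def)
  have h_adj: "adj (KB G) (h i) (h j) \<longleftrightarrow> adj (star n) i j" if "i \<in> {0..n}" "j \<in> {0..n}" for i j
    using f_adj h that by metis
  have "biclique_star G (h 0) h n"
    unfolding biclique_star_def
  proof (intro conjI ballI impI)
    show "is_biclique G (h 0)" using h[of 0] S by (auto simp: verts_KB)
    fix i assume i: "i \<in> {1..n}"
    then have "adj (KB G) (h i) (h 0)" using h_adj[of i 0] by (simp add: adj_star)
    then show "is_biclique G (h i)" "h i \<inter> h 0 \<noteq> {}" "h i \<noteq> h 0" by (simp_all add: adj_KB)
    fix j assume j: "j \<in> {1..n}" "i \<noteq> j"
    have "\<not> adj (KB G) (h i) (h j)" using h_adj[of i j] i j by (simp add: adj_star)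
    moreover have "h i \<noteq> h j" using h[of i] h[of j] i j by auto
    ultimately show "h i \<inter> h j = {}" using h[of i] h[of j] i j S by (auto simp: adj_KB verts_KB)
  qed
  moreover have "S = insert (h 0) (h ` {1..n})"
  proof
    show "S \<subseteq> insert (h 0) (h ` {1..n})"
    proof
      fix P assume "P \<in> S"
      then show "P \<in> insert (h 0) (h ` {1..n})" using hf[of P] fS[of P] by (cases "f P = 0") auto
    qed
    show "insert (h 0) (h ` {1..n}) \<subseteq> S" using h by auto
  qed
  moreover have "P = h 0 \<and> Q \<in> h ` {1..n} \<or> Q = h 0 \<and> P \<in> h ` {1..n}"
    if "adj (induced (KB G) S) P Q" for P Q
  proof -
    have PQ: "P \<in> S" "Q \<in> S" "adj (star n) (f P) (f Q)"
      using that f_adj unfolding adj_induced by auto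
    then have "f P = 0 \<and> f Q \<in> {1..n} \<or> f Q = 0 \<and> f P \<in> {1..n}" by (auto simp: adj_star)
    then show ?thesis
    proof (elim disjE conjE)
      assume "f P = 0" "f Q \<in> {1..n}"
      then show ?thesis using hf[OF PQ(1)] rev_image_eqI[of "f Q" "{1..n}" Q h, OF _ hf[OF PQ(2), symmetric]] by simp
    next
      assume "f Q = 0" "f P \<in> {1..n}"
      then show ?thesis using hf[OF PQ(2)] rev_image_eqI[of "f P" "{1..n}" P h, OF _ hf[OF PQ(1), symmetric]] by simp
    qed
  qed
  ultimately show thesis by (rule that[of "h 0" h])
qed

theorem corollary4:
  fixes G :: "'a graph" and n :: nat and S :: "'a set set"
  assumes "simple_graph G"
    and "triangle_free G"
    and "n \<ge> 1"
    and "S \<subseteq> verts (KB G)"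
    and "isomorphic (induced (KB G) S) (star n)"
  shows "\<exists>H. subgraph H (KB G) \<and>
             verts (induced (KB G) S) \<subseteq> verts H \<and>
             (\<forall>x y. adj (induced (KB G) S) x y \<longrightarrow> adj H x y) \<and>
             (isomorphic H (square (D n)) \<or> isomorphic H (square (D_minus n)))"
proof (rule induced_star_in_KB[OF assms(4,5)])
  fix C L assume star: "biclique_star G C L n" and S: "S = insert C (L ` {1..n})"
    and S_adj: "\<And>P Q. adj (induced (KB G) S) P Q \<Longrightarrow> P = C \<and> Q \<in> L ` {1..n} \<or> Q = C \<and> P \<in> L ` {1..n}"
  obtain H where H: "subgraph H (KB G)" "\<forall>i\<in>{1..n}. adj H C (L i)"
    and iso: "isomorphic H (square (D n)) \<or> isomorphic H (square (D_minus n))"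
    using biclique_star_square_D_extension[OF assms(1,2) star] unfolding square_D_extension_def by blast
  have "C \<in> verts H \<and> L i \<in> verts H \<and> adj H (L i) C" if "i \<in> {1..n}" for i
    using simple_graph_adjD[of H C "L i"] H that unfolding subgraph_def by blast
  moreover have "1 \<in> {1..n}" using assms(3) by simp
  ultimately show ?thesis
    using H(1) iso H(2) S_adj unfolding S verts_induced by blast
qed

end
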